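(* Let an instance of $\mathrm{MaxTotal}$ in the $k$R-model be given (as defined in the context), in which every conflict range has positive length. Let $E$ be the ordered set of all conflict events together with $0$ and $2\pi$, and for $j\in\{0,\dots,|E|-2\}$ let $E[j]$ be the interval between the $j$-th and $(j+1)$-th element of $E$ (indices modulo $|E|-1$). Consider the integer linear program with binary variables $x_i^j,b_i^j$ for each label $\ell_i\in L$ and each $j\in\{0,\dots,|E|-2\}$, with constraints $x_i^j-b_i^j\le x_i^{j-1}$ for all $\ell_i\in L$ and all $j$; $\sum_{0\le j\le |E|-2} b_i^j\le k$ for all $\ell_i\in L$; $x_i^j+x_m^j\le 1$ for every pair of labels $\ell_i,\ell_m$ and every $j$ such that $\ell_i$ and $\ell_m$ are in conflict during $E[j]$; and objective to maximize $\sum_{\ell_i\in L}\sum_{0\le j\le|E|-2} x_i^j\,|E[j]|$. Then an optimal solution of this ILP, interpreted as the labeling in which $\ell_i$ is active during $E[j]$ iff $x_i^j=1$, is an optimal solution of $\mathrm{MaxTotal}$. The ILP has at most $O(e\cdot n)$ variables and $O(c\cdot e\cdot n)$ constraints, where $n$ is the number of labels, $e$ the number of conflict events, and $c$ the maximum number of conflicts per label.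
   Context: Input: a set $P=\{p_1,\dots,p_n\}$ of points in the plane and a set $L=\{\ell_1,\dots,\ell_n\}$ of pairwise disjoint, closed, axis-aligned rectangular labels, where $p_i$ coincides with a corner (the anchor) of $\ell_i$. Angles are taken modulo $2\pi$; for $a,b\in[0,2\pi]$, $[a,b]$ is the usual interval if $a\le b$ and $[a,2\pi]\cup[0,b]$ otherwise, with length $b-a$ resp. $2\pi-a+b$. For $\alpha\in[0,2\pi)$, $L(\alpha)$ is the set of labels each rotated by $\alpha$ around its anchor. A rotation labeling $\phi:L\times[0,2\pi)\to\{0,1\}$ is valid if for each $\alpha$ the active labels in $L(\alpha)$ are pairwise disjoint. Two labels are in conflict at $\alpha$ if they intersect in $L(\alpha)$; the maximal contiguous ranges of the set of such $\alpha$ are conflict ranges, and their endpoints are conflict events. An active range of a label is a maximal interval on which it is active. The total activity $t(\phi)$ is the sum over all labels of the lengths of their active ranges. $\mathrm{MaxTotal}$ in the $k$R-model: find a valid labeling in which each label has at most $k$ active ranges, maximizing $t(\phi)$. *)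

theory Defs
  imports "HOL-Analysis.Analysis"
begin

(* Points of the plane are complex numbers; rotation by alpha about c is z |-> c + cis alpha * (z - c).
   An instance consists of n labels indexed by 0..n-1: anchors p i and label sets lab i. *)

definition rect :: "real \<Rightarrow> real \<Rightarrow> real \<Rightarrow> real \<Rightarrow> complex set" where
  "rect x0 x1 y0 y1 = {z. x0 \<le> Re z \<and> Re z \<le> x1 \<and> y0 \<le> Im z \<and> Im z \<le> y1}"

definition rotate_about :: "complex \<Rightarrow> real \<Rightarrow> complex set \<Rightarrow> complex set" where
  "rotate_about c \<alpha> S = (\<lambda>z. c + cis \<alpha> * (z - c)) ` S"

definition label_instance :: "nat \<Rightarrow> (nat \<Rightarrow> complex) \<Rightarrow> (nat \<Rightarrow> complex set) \<Rightarrow> bool" where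
  "label_instance n p lab \<longleftrightarrow>
     (\<forall>i<n. \<exists>x0 x1 y0 y1. x0 < x1 \<and> y0 < y1 \<and> lab i = rect x0 x1 y0 y1 \<and>
         p i \<in> {Complex x0 y0, Complex x0 y1, Complex x1 y0, Complex x1 y1}) \<and>
     (\<forall>i<n. \<forall>m<n. i \<noteq> m \<longrightarrow> lab i \<inter> lab m = {})"

definition in_conflict :: "(nat \<Rightarrow> complex) \<Rightarrow> (nat \<Rightarrow> complex set) \<Rightarrow> nat \<Rightarrow> nat \<Rightarrow> real \<Rightarrow> bool" where
  "in_conflict p lab i m \<alpha> \<longleftrightarrow>
     i \<noteq> m \<and> rotate_about (p i) \<alpha> (lab i) \<inter> rotate_about (p m) \<alpha> (lab m) \<noteq> {}"

text \<open>Conflict ranges: maximal contiguous ranges of the (2pi-periodic) set of conflict angles,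
  lifted to the real line.\<close>
definition conflict_ranges :: "(nat \<Rightarrow> complex) \<Rightarrow> (nat \<Rightarrow> complex set) \<Rightarrow> nat \<Rightarrow> nat \<Rightarrow> real set set" where
  "conflict_ranges p lab i m = components {\<alpha>. in_conflict p lab i m \<alpha>}"

definition conflict_events :: "nat \<Rightarrow> (nat \<Rightarrow> complex) \<Rightarrow> (nat \<Rightarrow> complex set) \<Rightarrow> real set" where
  "conflict_events n p lab =
     {\<alpha> \<in> {0..<2*pi}. \<exists>i<n. \<exists>m<n. \<exists>C \<in> conflict_ranges p lab i m. \<alpha> \<in> frontier C}"

definition event_list :: "nat \<Rightarrow> (nat \<Rightarrow> complex) \<Rightarrow> (nat \<Rightarrow> complex set) \<Rightarrow> real list" where
  "event_list n p lab = sorted_list_of_set (insert 0 (insert (2*pi) (conflict_events n p lab)))"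

definition num_intervals :: "nat \<Rightarrow> (nat \<Rightarrow> complex) \<Rightarrow> (nat \<Rightarrow> complex set) \<Rightarrow> nat" where
  "num_intervals n p lab = length (event_list n p lab) - 1"

definition conflict_during :: "nat \<Rightarrow> (nat \<Rightarrow> complex) \<Rightarrow> (nat \<Rightarrow> complex set) \<Rightarrow> nat \<Rightarrow> nat \<Rightarrow> nat \<Rightarrow> bool" where
  "conflict_during n p lab i m j \<longleftrightarrow>
     (\<exists>\<alpha>. event_list n p lab ! j < \<alpha> \<and> \<alpha> < event_list n p lab ! (j+1) \<and> in_conflict p lab i m \<alpha>)"

text \<open>A rotation labeling phi : L x [0,2pi) -> {0,1}; only values on [0,2pi) matter.\<close>
definition valid_labeling :: "nat \<Rightarrow> (nat \<Rightarrow> complex) \<Rightarrow> (nat \<Rightarrow> complex set) \<Rightarrow> (nat \<Rightarrow> real \<Rightarrow> bool) \<Rightarrow> bool" where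
  "valid_labeling n p lab \<phi> \<longleftrightarrow>
     (\<forall>\<alpha> \<in> {0..<2*pi}. \<forall>i<n. \<forall>m<n. i \<noteq> m \<longrightarrow> \<phi> i \<alpha> \<longrightarrow> \<phi> m \<alpha> \<longrightarrow>
        rotate_about (p i) \<alpha> (lab i) \<inter> rotate_about (p m) \<alpha> (lab m) = {})"

definition active_ranges :: "(nat \<Rightarrow> real \<Rightarrow> bool) \<Rightarrow> nat \<Rightarrow> complex set set" where
  "active_ranges \<phi> i = components (cis ` {\<alpha> \<in> {0..<2*pi}. \<phi> i \<alpha>})"

definition range_length :: "complex set \<Rightarrow> real" where
  "range_length C = measure lebesgue {\<alpha> \<in> {0..<2*pi}. cis \<alpha> \<in> C}"

definition total_activity :: "nat \<Rightarrow> (nat \<Rightarrow> real \<Rightarrow> bool) \<Rightarrow> real" where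
  "total_activity n \<phi> = (\<Sum>i<n. \<Sum>C \<in> active_ranges \<phi> i. range_length C)"

definition kR_feasible :: "nat \<Rightarrow> (nat \<Rightarrow> complex) \<Rightarrow> (nat \<Rightarrow> complex set) \<Rightarrow> nat \<Rightarrow> (nat \<Rightarrow> real \<Rightarrow> bool) \<Rightarrow> bool" where
  "kR_feasible n p lab k \<phi> \<longleftrightarrow>
     valid_labeling n p lab \<phi> \<and> (\<forall>i<n. finite (active_ranges \<phi> i) \<and> card (active_ranges \<phi> i) \<le> k)"

definition maxtotal_optimal :: "nat \<Rightarrow> (nat \<Rightarrow> complex) \<Rightarrow> (nat \<Rightarrow> complex set) \<Rightarrow> nat \<Rightarrow> (nat \<Rightarrow> real \<Rightarrow> bool) \<Rightarrow> bool" where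
  "maxtotal_optimal n p lab k \<phi> \<longleftrightarrow>
     kR_feasible n p lab k \<phi> \<and>
     (\<forall>\<psi>. kR_feasible n p lab k \<psi> \<longrightarrow> total_activity n \<psi> \<le> total_activity n \<phi>)"

definition ilp_feasible :: "nat \<Rightarrow> (nat \<Rightarrow> complex) \<Rightarrow> (nat \<Rightarrow> complex set) \<Rightarrow> nat \<Rightarrow>
    (nat \<Rightarrow> nat \<Rightarrow> int) \<Rightarrow> (nat \<Rightarrow> nat \<Rightarrow> int) \<Rightarrow> bool" where
  "ilp_feasible n p lab k x b \<longleftrightarrow>
     (let N = num_intervals n p lab in
       (\<forall>i<n. \<forall>j<N. x i j \<in> {0,1} \<and> b i j \<in> {0,1}) \<and>
       (\<forall>i<n. \<forall>j<N. x i j - b i j \<le> x i ((j + N - 1) mod N)) \<and>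
       (\<forall>i<n. (\<Sum>j<N. b i j) \<le> int k) \<and>
       (\<forall>i<n. \<forall>m<n. \<forall>j<N. i \<noteq> m \<longrightarrow> conflict_during n p lab i m j \<longrightarrow> x i j + x m j \<le> 1))"

definition ilp_objective :: "nat \<Rightarrow> (nat \<Rightarrow> complex) \<Rightarrow> (nat \<Rightarrow> complex set) \<Rightarrow> (nat \<Rightarrow> nat \<Rightarrow> int) \<Rightarrow> real" where
  "ilp_objective n p lab x =
     (\<Sum>i<n. \<Sum>j<num_intervals n p lab.
        of_int (x i j) * (event_list n p lab ! (j+1) - event_list n p lab ! j))"

definition ilp_optimal :: "nat \<Rightarrow> (nat \<Rightarrow> complex) \<Rightarrow> (nat \<Rightarrow> complex set) \<Rightarrow> nat \<Rightarrow>
    (nat \<Rightarrow> nat \<Rightarrow> int) \<Rightarrow> (nat \<Rightarrow> nat \<Rightarrow> int) \<Rightarrow> bool" where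
  "ilp_optimal n p lab k x b \<longleftrightarrow>
     ilp_feasible n p lab k x b \<and>
     (\<forall>x' b'. ilp_feasible n p lab k x' b' \<longrightarrow> ilp_objective n p lab x' \<le> ilp_objective n p lab x)"

definition ilp_num_variables :: "nat \<Rightarrow> (nat \<Rightarrow> complex) \<Rightarrow> (nat \<Rightarrow> complex set) \<Rightarrow> nat" where
  "ilp_num_variables n p lab = 2 * n * num_intervals n p lab"

definition ilp_num_constraints :: "nat \<Rightarrow> (nat \<Rightarrow> complex) \<Rightarrow> (nat \<Rightarrow> complex set) \<Rightarrow> nat" where
  "ilp_num_constraints n p lab =
     n * num_intervals n p lab + n +
     card {(i, m, j). i < m \<and> m < n \<and> j < num_intervals n p lab \<and> conflict_during n p lab i m j}"

definition max_conflicts :: "nat \<Rightarrow> (nat \<Rightarrow> complex) \<Rightarrow> (nat \<Rightarrow> complex set) \<Rightarrow> nat" where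
  "max_conflicts n p lab =
     Max (insert 0 ((\<lambda>i. card {m. m < n \<and> (\<exists>\<alpha>. in_conflict p lab i m \<alpha>)}) ` {..<n}))"

end

theory Submission
  imports Defs
begin

text \<open>The conflict events cut the circle of angles into cells, and on each cell the conflict status
  of every pair of labels is constant. An ILP solution is turned into a labeling by making label
  \<open>i\<close> active on the cells with \<open>x\<^sub>i\<^sup>j = 1\<close> (and at an event only when it is active on both sides);
  it is valid because conflicts at events extend into an adjacent cell (conflict ranges have
  positive length), its active ranges are the cyclic runs of ones, whose starts are counted by the
  \<open>b\<close>-variables, and its total activity is the ILP objective.
  Conversely, a \<open>k\<close>R-feasible labeling is dominated by the ILP solution that samples it in every cell
  at a point where the most labels are active: the activity inside a cell is at most that number
  times the cell length, the sample inherits validity from the constancy of conflicts on cells, and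
  two switch-ons of a label in the cyclic sequence of samples cannot lie in the same active range,
  so there are at most \<open>k\<close> of them.\<close>

section \<open>Angles on the circle\<close>

lemma cis_add_2pi [simp]: "cis (t + 2*pi) = cis t"
  by (simp add: cis_mult[symmetric])

lemma cis_diff_2pi [simp]: "cis (t - 2*pi) = cis t"
  using cis_add_2pi[of "t - 2*pi"] by simp

lemma inj_on_cis_0_2pi: "inj_on cis {0..<2*pi}"
proof (rule inj_onI)
  fix a b assume a: "a \<in> {0..<2*pi}" and b: "b \<in> {0..<2*pi}" and eq: "cis a = cis b"
  have "Arg2pi (cis a) = a" "Arg2pi (cis b) = b"
    using a b by (auto simp: cis_conv_exp Arg2pi_exp)
  with eq show "a = b" by metis
qed

lemma cis_image_0_2pi: "cis ` {0..<2*pi} = sphere 0 1"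
proof
  show "sphere 0 1 \<subseteq> cis ` {0..<2*pi}"
  proof
    fix z :: complex assume "z \<in> sphere 0 1"
    then have "cis (Arg2pi z) = z"
      using complex_norm_eq_1_exp by (simp add: cis_conv_exp)
    moreover have "Arg2pi z \<in> {0..<2*pi}" using Arg2pi[of z] by auto
    ultimately show "z \<in> cis ` {0..<2*pi}" by (metis image_eqI)
  qed
qed auto

lemma finite_imp_null_set_lebesgue: "finite (A :: real set) \<Longrightarrow> A \<in> null_sets lebesgue"
  by (simp add: finite_imp_null_set_lborel null_sets_completionI)

text \<open>Cutting the circle at a point \<open>cis \<beta>\<close> outside \<open>C\<close>, the angle measured from \<open>\<beta>\<close> is a
  continuous inverse of \<open>cis\<close> on \<open>C\<close>, so the lift of \<open>C\<close> to \<open>(\<beta>, \<beta> + 2\<pi>)\<close> is connected.\<close>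
lemma is_interval_connected_arc_lift:
  assumes C: "connected C" "C \<subseteq> sphere 0 1" "cis \<beta> \<notin> C"
  shows "is_interval {t \<in> {\<beta><..<\<beta>+2*pi}. cis t \<in> C}"
proof -
  define h where "h z = \<beta> + Arg2pi (z / cis \<beta>)" for z
  have h_cis: "h (cis t) = t" if "\<beta> < t" "t < \<beta> + 2*pi" for t
  proof -
    have "cis t / cis \<beta> = exp (\<i> * complex_of_real (t - \<beta>))"
      using cis_divide[of t \<beta>] cis_conv_exp[of "t - \<beta>"] by simp
    then show ?thesis using that by (simp add: h_def Arg2pi_exp)
  qed
  have h_C: "\<beta> < h z \<and> h z < \<beta> + 2*pi \<and> cis (h z) = z \<and> z / cis \<beta> \<notin> \<real>\<^sub>\<ge>\<^sub>0"
    if "z \<in> C" for z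
  proof -
    define w where "w = z / cis \<beta>"
    have nw: "norm w = 1" using that C by (auto simp: w_def norm_divide)
    have w1: "w \<noteq> 1" using that C(3) by (auto simp: w_def)
    have wnn: "w \<notin> \<real>\<^sub>\<ge>\<^sub>0"
    proof
      assume "w \<in> \<real>\<^sub>\<ge>\<^sub>0"
      then obtain r where "w = of_real r" "r \<ge> 0"
        by (auto simp: complex_nonneg_Reals_iff complex_eq_iff)
      with nw w1 show False by auto
    qed
    have "Arg2pi w \<noteq> 0"
      using wnn by (auto simp: Arg2pi_eq_0 complex_nonneg_Reals_iff complex_is_Real_iff)
    moreover have "exp (\<i> * of_real (Arg2pi w)) = w" using nw complex_norm_eq_1_exp by blast
    then have "cis (h z) = z"
      by (simp add: h_def w_def cis_mult[symmetric] cis_conv_exp[symmetric])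
    moreover have "0 \<le> Arg2pi w" "Arg2pi w < 2*pi" using Arg2pi by auto
    ultimately show ?thesis using wnn by (auto simp: h_def w_def)
  qed
  have "continuous_on C h"
  proof (rule continuous_at_imp_continuous_on, intro ballI)
    fix z assume "z \<in> C"
    then have "continuous (at (z / cis \<beta>)) Arg2pi"
      using h_C continuous_at_Arg2pi by blast
    then have "continuous (at z) (\<lambda>z. Arg2pi (z / cis \<beta>))"
      by (intro continuous_at_compose[unfolded o_def, where f="\<lambda>z. z / cis \<beta>" and g=Arg2pi])
        (auto intro!: continuous_intros)
    then show "continuous (at z) h" unfolding h_def by (intro continuous_intros)
  qed
  moreover have "{t \<in> {\<beta><..<\<beta>+2*pi}. cis t \<in> C} = h ` C"
    using h_cis h_C by (auto intro!: image_eqI)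
  ultimately show ?thesis
    unfolding is_interval_connected_1 using C(1) by (simp add: connected_continuous_image)
qed

lemma connected_arc_separation:
  assumes C: "connected C" "C \<subseteq> sphere 0 1"
    and t: "t1 < t2" "t2 < t3" "t3 < t4" "t4 < t1 + 2*pi"
    and c: "cis t1 \<in> C" "cis t3 \<in> C"
  shows "cis t2 \<in> C \<or> cis t4 \<in> C"
proof (rule ccontr)
  assume "\<not> ?thesis"
  then have n2: "cis t2 \<notin> C" and n4: "cis (t4 - 2*pi) \<notin> C" by auto
  define L where "L = {t \<in> {t4 - 2*pi<..<t4 - 2*pi + 2*pi}. cis t \<in> C}"
  have "is_interval L" unfolding L_def by (rule is_interval_connected_arc_lift[OF C n4])
  moreover have "t1 \<in> L" "t3 \<in> L" using t c by (auto simp: L_def)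
  ultimately have "t2 \<in> L" using t unfolding is_interval_1 by (meson less_imp_le)
  with n2 show False by (simp add: L_def)
qed

lemma connected_arc_lift_borel:
  assumes C: "connected C" "C \<subseteq> sphere 0 1"
  shows "{\<alpha> \<in> {0..<2*pi}. cis \<alpha> \<in> C} \<in> sets borel"
proof (cases "\<forall>\<alpha>\<in>{0..<2*pi}. cis \<alpha> \<in> C")
  case True
  then have "{\<alpha> \<in> {0..<2*pi}. cis \<alpha> \<in> C} = {0..<2*pi}" by auto
  then show ?thesis by simp
next
  case False
  then obtain \<beta> where b: "0 \<le> \<beta>" "\<beta> < 2*pi" "cis \<beta> \<notin> C" by auto
  define L where "L = {t \<in> {\<beta><..<\<beta>+2*pi}. cis t \<in> C}"
  have L: "is_interval L" unfolding L_def by (rule is_interval_connected_arc_lift[OF C b(3)])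
  have "{\<alpha> \<in> {0..<2*pi}. cis \<alpha> \<in> C} = (L \<inter> {\<beta><..<2*pi}) \<union> ({0..<\<beta>} \<inter> {t. t + 2*pi \<in> L})"
  proof (intro set_eqI iffI)
    fix a assume a: "a \<in> {\<alpha> \<in> {0..<2*pi}. cis \<alpha> \<in> C}"
    then have "a \<noteq> \<beta>" using b by auto
    then show "a \<in> (L \<inter> {\<beta><..<2*pi}) \<union> ({0..<\<beta>} \<inter> {t. t + 2*pi \<in> L})"
      using a b by (cases "\<beta> < a") (auto simp: L_def)
  qed (use b in \<open>auto simp: L_def\<close>)
  moreover have "is_interval (L \<inter> {\<beta><..<2*pi})"
    using L by (auto simp: is_interval_1)
  moreover have "is_interval ({0..<\<beta>} \<inter> {t. t + 2*pi \<in> L})"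
    using L unfolding is_interval_1 by (auto; meson add_le_cancel_right)
  ultimately show ?thesis by (auto intro: real_interval_borel_measurable)
qed

lemma measure_eq_sum_range_length_components:
  assumes A: "A \<subseteq> {0..<2*pi}" and fin: "finite (components (cis ` A))"
  shows "A \<in> sets lebesgue" "(\<Sum>C\<in>components (cis ` A). range_length C) = measure lebesgue A"
proof -
  define lift where "lift C = {\<alpha> \<in> {0..<2*pi}. cis \<alpha> \<in> C}" for C
  have lift_sets: "lift C \<in> sets lebesgue" if "C \<in> components (cis ` A)" for C
  proof -
    have "connected C" "C \<subseteq> sphere 0 1"
      using that in_components_connected in_components_subset by fastforce+
    then show ?thesis unfolding lift_def using connected_arc_lift_borel by auto
  qed
  have A_eq: "A = (\<Union>C\<in>components (cis ` A). lift C)"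
  proof -
    have "A = {\<alpha> \<in> {0..<2*pi}. cis \<alpha> \<in> cis ` A}"
      using A inj_on_cis_0_2pi by (auto dest: inj_onD)
    also have "\<dots> = {\<alpha> \<in> {0..<2*pi}. cis \<alpha> \<in> \<Union>(components (cis ` A))}"
      by (simp only: Union_components)
    also have "\<dots> = (\<Union>C\<in>components (cis ` A). lift C)"
      unfolding lift_def by blast
    finally show ?thesis .
  qed
  show "A \<in> sets lebesgue"
    using fin lift_sets by (subst A_eq) (auto intro!: sets.finite_UN)
  have "measure lebesgue A = (\<Sum>C\<in>components (cis ` A). measure lebesgue (lift C))"
  proof (subst A_eq, rule measure_finite_Union[OF fin])
    show "lift ` components (cis ` A) \<subseteq> sets lebesgue" using lift_sets by auto
    show "disjoint_family_on lift (components (cis ` A))"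
      unfolding disjoint_family_on_def lift_def using components_nonoverlap by blast
    fix C
    have "emeasure lebesgue (lift C) \<le> emeasure lebesgue {0..2*pi}"
      by (rule emeasure_mono) (auto simp: lift_def)
    then show "emeasure lebesgue (lift C) \<noteq> \<infinity>" by (auto simp: top_unique)
  qed
  then show "(\<Sum>C\<in>components (cis ` A). range_length C) = measure lebesgue A"
    by (simp add: range_length_def lift_def)
qed

section \<open>Components and counting\<close>

lemma cyclic_pred_pos:
  fixes j N :: nat
  assumes "0 < j" "j < N"
  shows "(j + N - 1) mod N = j - 1"
proof -
  have "(j + N - 1) mod N = ((j - 1) + N) mod N" using assms by simp
  also have "\<dots> = (j - 1) mod N" by (rule mod_add_self2)
  also have "\<dots> = j - 1" using assms by simp
  finally show ?thesis .
qed

lemma card_components_UN_connected_le: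
  assumes R: "finite R" and U: "\<And>r. r \<in> R \<Longrightarrow> connected (U r)" and S: "S = (\<Union>r\<in>R. U r)"
  shows "finite (components S)" "card (components S) \<le> card R"
proof -
  have "\<exists>r\<in>R. U r \<inter> C \<noteq> {}" if "C \<in> components S" for C
    using in_components_nonempty[OF that] in_components_subset[OF that] S by blast
  then obtain g where g: "\<And>C. C \<in> components S \<Longrightarrow> g C \<in> R \<and> U (g C) \<inter> C \<noteq> {}"
    by metis
  have sub: "U (g C) \<subseteq> C" if "C \<in> components S" for C
    using components_maximal[OF that U] g[OF that] S by blast
  have "inj_on g (components S)"
  proof (rule inj_onI)
    fix C C' assume C: "C \<in> components S" "C' \<in> components S" "g C = g C'"
    then have "U (g C) \<subseteq> C \<inter> C'" using sub by fastforce
    then show "C = C'" using components_eq[OF C(1,2)] g[OF C(1)] by blast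
  qed
  moreover have "g ` components S \<subseteq> R" using g by blast
  ultimately show "finite (components S)" "card (components S) \<le> card R"
    using R inj_on_finite card_inj_on_le by blast+
qed

text \<open>Sample points \<open>\<sigma> 0 < \<dots> < \<sigma> (N - 1)\<close> around the circle: each time the cyclic sequence of
  samples enters \<open>S\<close> it enters a new component, since two entries into the same component would
  force a component of \<open>S\<close> to contain two points separated on the circle by points outside it.\<close>
lemma card_cyclic_entries_le_card_components:
  fixes \<sigma> :: "nat \<Rightarrow> real" and S :: "complex set"
  assumes S: "S \<subseteq> sphere 0 1" "finite (components S)"
    and \<sigma>_mono: "\<And>a b. a < b \<Longrightarrow> b < N \<Longrightarrow> \<sigma> a < \<sigma> b"
    and \<sigma>_range: "\<And>j. j < N \<Longrightarrow> \<sigma> j \<in> {0..<2*pi}"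
  shows "card {j. j < N \<and> cis (\<sigma> j) \<in> S \<and> cis (\<sigma> ((j + N - 1) mod N)) \<notin> S}
    \<le> card (components S)"
proof -
  define R where "R = {j. j < N \<and> cis (\<sigma> j) \<in> S \<and> cis (\<sigma> ((j + N - 1) mod N)) \<notin> S}"
  define f where "f j = connected_component_set S (cis (\<sigma> j))" for j
  have f_neq: "f j1 \<noteq> f j2" if j: "j1 \<in> R" "j2 \<in> R" "j1 < j2" for j1 j2
  proof
    assume feq: "f j1 = f j2"
    define C where "C = f j1"
    have C: "connected C" "C \<subseteq> S" by (simp_all add: C_def f_def connected_component_subset)
    then have C_sphere: "C \<subseteq> sphere 0 1" using S(1) by blast
    have c1: "cis (\<sigma> j1) \<in> C" using j by (simp add: C_def f_def R_def)
    have c2: "cis (\<sigma> j2) \<in> C" unfolding C_def feq using j by (simp add: f_def R_def)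
    have out: "cis (\<sigma> (j2 - 1)) \<notin> S" using j cyclic_pred_pos[of j2 N] by (simp add: R_def)
    then have "j2 - 1 \<noteq> j1" using j by (auto simp: R_def)
    then have "j1 < j2 - 1" using j by simp
    then have t12: "\<sigma> j1 < \<sigma> (j2 - 1)" "\<sigma> (j2 - 1) < \<sigma> j2"
      using \<sigma>_mono j by (auto simp: R_def)
    have "\<exists>t4. \<sigma> j2 < t4 \<and> t4 < \<sigma> j1 + 2*pi \<and> cis t4 \<notin> S"
    proof (cases "j1 = 0")
      case True
      then have "cis (\<sigma> (N - 1)) \<notin> S" "j2 \<noteq> N - 1" using j by (auto simp: R_def)
      then show ?thesis using \<sigma>_mono[of j2 "N - 1"] \<sigma>_range[of "N - 1"] \<sigma>_range[of j1] True j
        by (intro exI[of _ "\<sigma> (N - 1)"]) (auto simp: R_def)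
    next
      case False
      have "j1 - 1 < N" using j by (auto simp: R_def)
      moreover have "cis (\<sigma> (j1 - 1) + 2*pi) \<notin> S" using j cyclic_pred_pos[of j1] False by (auto simp: R_def)
      ultimately show ?thesis using \<sigma>_mono[of "j1 - 1" j1] \<sigma>_range[of j2] \<sigma>_range[of "j1 - 1"] False j
        by (intro exI[of _ "\<sigma> (j1 - 1) + 2*pi"]) (auto simp: R_def)
    qed
    then obtain t4 where t4: "\<sigma> j2 < t4" "t4 < \<sigma> j1 + 2*pi" "cis t4 \<notin> S" by blast
    have "cis (\<sigma> (j2 - 1)) \<in> C \<or> cis t4 \<in> C"
      by (rule connected_arc_separation[OF C(1) C_sphere t12 t4(1,2) c1 c2])
    then show False using C(2) t4(3) out by blast
  qed
  have "inj_on f R"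
    by (rule inj_onI) (metis f_neq linorder_neqE_nat)
  moreover have "f ` R \<subseteq> components S"
    by (auto simp: f_def R_def intro!: componentsI)
  ultimately show ?thesis
    using card_inj_on_le S(2) unfolding R_def by blast
qed

lemma sum_measure_Int_Ioo_le:
  fixes A :: "nat \<Rightarrow> real set"
  assumes ab: "a < b" and A: "\<And>i. i < n \<Longrightarrow> A i \<in> sets lebesgue"
    and M: "\<And>t. t \<in> {a<..<b} \<Longrightarrow> card {i. i < n \<and> t \<in> A i} \<le> M"
  shows "(\<Sum>i<n. measure lebesgue (A i \<inter> {a<..<b})) \<le> real M * (b - a)"
proof -
  have int: "integrable lebesgue (indicator (A i \<inter> {a<..<b}) :: real \<Rightarrow> real)" if "i < n" for i
  proof (rule integrable_real_indicator)
    have "emeasure lebesgue (A i \<inter> {a<..<b}) \<le> emeasure lebesgue {a<..<b}"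
      by (rule emeasure_mono) auto
    then show "emeasure lebesgue (A i \<inter> {a<..<b}) < \<infinity>"
      using ab by (simp add: order.strict_trans1 ennreal_less_top)
  qed (use A that in auto)
  have "(\<Sum>i<n. measure lebesgue (A i \<inter> {a<..<b}))
      = integral\<^sup>L lebesgue (\<lambda>t. \<Sum>i<n. indicator (A i \<inter> {a<..<b}) t :: real)"
    using int by (simp add: integral_sum)
  also have "\<dots> \<le> integral\<^sup>L lebesgue (\<lambda>t. real M * indicator {a<..<b} t :: real)"
  proof (rule integral_mono)
    fix t :: real
    show "(\<Sum>i<n. indicator (A i \<inter> {a<..<b}) t) \<le> real M * indicator {a<..<b} t"
    proof (cases "t \<in> {a<..<b}")
      case True
      then have "(\<Sum>i<n. indicator (A i \<inter> {a<..<b}) t :: real) = (\<Sum>i<n. of_bool (t \<in> A i))"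
        by (intro sum.cong) (auto simp: indicator_def)
      also have "\<dots> = real (card {i. i < n \<and> t \<in> A i})"
        by (simp add: Int_def)
      finally show ?thesis using M[OF True] True by simp
    qed simp
  qed (use int ab in \<open>auto simp: emeasure_lborel_Ioo\<close>)
  also have "\<dots> = real M * (b - a)" using ab by simp
  finally show ?thesis .
qed

lemma interval_meets_punctured_neighbourhood:
  fixes C :: "real set"
  assumes C: "is_interval C" "e \<in> C" "c \<in> C" "c \<noteq> e" and ab: "a < e" "e < b"
  shows "(\<exists>t\<in>C. e < t \<and> t < b) \<or> (\<exists>t\<in>C. a < t \<and> t < e)"
proof (cases "e < c")
  case True
  define t where "t = (e + min c b) / 2"
  have "e < t" "t < b" "t \<le> c" using True ab by (auto simp: t_def)
  then have "t \<in> C" using C(1-3) unfolding is_interval_1 by (meson less_imp_le)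
  then show ?thesis using \<open>e < t\<close> \<open>t < b\<close> by blast
next
  case False
  define t where "t = (max c a + e) / 2"
  have "a < t" "t < e" "c \<le> t" using False C(4) ab by (auto simp: t_def)
  then have "t \<in> C" using C(1-3) unfolding is_interval_1 by (meson less_imp_le)
  then show ?thesis using \<open>a < t\<close> \<open>t < e\<close> by blast
qed

lemma card_rises_le_sum:
  fixes x b :: "'a \<Rightarrow> int"
  assumes "finite J" and "\<And>j. j \<in> J \<Longrightarrow> 0 \<le> b j" and "\<And>j. j \<in> J \<Longrightarrow> x j - b j \<le> x (f j)"
  shows "int (card {j \<in> J. x j = 1 \<and> x (f j) = 0}) \<le> sum b J"
proof -
  have "int (card {j \<in> J. x j = 1 \<and> x (f j) = 0}) = (\<Sum>j \<in> {j \<in> J. x j = 1 \<and> x (f j) = 0}. 1)"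
    by simp
  also have "\<dots> \<le> (\<Sum>j \<in> {j \<in> J. x j = 1 \<and> x (f j) = 0}. b j)"
    using assms(3) by (intro sum_mono) force
  also have "\<dots> \<le> sum b J"
    using assms(1,2) by (intro sum_mono2) auto
  finally show ?thesis .
qed

section \<open>Partitions of the circle into cells\<close>

locale circle_partition =
  fixes E :: "real list"
  assumes E_sorted: "sorted_wrt (<) E"
    and E_first: "E ! 0 = 0"
    and E_last: "E ! (length E - 1) = 2*pi"
    and E_length: "2 \<le> length E"
begin

abbreviation N :: nat where "N \<equiv> length E - 1"

definition cell :: "nat \<Rightarrow> real set" where "cell j = {E!j<..<E!(j+1)}"

definition prev :: "nat \<Rightarrow> nat" where "prev j = (j + N - 1) mod N"

text \<open>At an event the label is active only if it is active on both adjacent cells: this merges a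
  run of active cells into a single active range, and it is safe because a conflict at an event
  extends into one of the adjacent cells.\<close>
definition interval_labeling :: "(nat \<Rightarrow> bool) \<Rightarrow> real \<Rightarrow> bool" where
  "interval_labeling y \<alpha> \<longleftrightarrow> (\<exists>j<N. \<alpha> \<in> cell j \<and> y j) \<or> (\<exists>j<N. \<alpha> = E!j \<and> y j \<and> y (prev j))"

abbreviation active_angles :: "(nat \<Rightarrow> bool) \<Rightarrow> real set" where
  "active_angles y \<equiv> {\<alpha> \<in> {0..<2*pi}. interval_labeling y \<alpha>}"

lemma N_pos: "0 < N"
  using E_length by simp

lemma E_less: "i < j \<Longrightarrow> j \<le> N \<Longrightarrow> E!i < E!j"
  using sorted_wrt_nth_less[OF E_sorted, of i j] E_length by simp

lemma E_less_iff: "i \<le> N \<Longrightarrow> j \<le> N \<Longrightarrow> E!i < E!j \<longleftrightarrow> i < j"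
  using E_less[of i j] E_less[of j i] by (metis linorder_neqE_nat order.asym)

lemma E_le: "i \<le> j \<Longrightarrow> j \<le> N \<Longrightarrow> E!i \<le> E!j"
  using E_less_iff[of j i] by linarith

lemma E_range: "j \<le> N \<Longrightarrow> E!j \<in> {0..2*pi}"
  using E_le[of 0 j] E_le[of j N] E_first E_last by auto

lemma E_eq_iff: "i \<le> N \<Longrightarrow> j \<le> N \<Longrightarrow> E!i = E!j \<longleftrightarrow> i = j"
  using E_less_iff[of i j] E_less_iff[of j i] by (metis less_irrefl linorder_neqE_nat)

lemma event_notin_cell: "j < N \<Longrightarrow> i \<le> N \<Longrightarrow> E!i \<notin> cell j"
  using E_less_iff[of j i] E_less_iff[of i "j+1"] by (auto simp: cell_def)

lemma set_notin_cell: "e \<in> set E \<Longrightarrow> j < N \<Longrightarrow> e \<notin> cell j"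
  using event_notin_cell by (auto simp: in_set_conv_nth)

lemma cell_subset: "j < N \<Longrightarrow> cell j \<subseteq> {0<..<2*pi}"
  using E_range[of j] E_range[of "j+1"] by (auto simp: cell_def)

lemma cell_disjoint: "j < N \<Longrightarrow> j' < N \<Longrightarrow> t \<in> cell j \<Longrightarrow> t \<in> cell j' \<Longrightarrow> j = j'"
  using E_le[of "j+1" j'] E_le[of "j'+1" j] by (fastforce simp: cell_def)

lemma midpoint_in_cell: "j < N \<Longrightarrow> (E!j + E!(j+1)) / 2 \<in> cell j"
  using E_less[of j "j+1"] by (auto simp: cell_def)

lemma cell_last: "cell (N - 1) = {E!(N - 1)<..<2*pi}"
proof -
  have "N - 1 + 1 = N" using N_pos by simp
  then show ?thesis unfolding cell_def by (simp only: E_last)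
qed

lemma measure_cell: "j < N \<Longrightarrow> measure lebesgue (cell j) = E!(j+1) - E!j"
  using E_less[of j "j+1"] by (simp add: cell_def)

lemma event_or_cell:
  assumes t: "t \<in> {0..<2*pi}"
  shows "\<exists>j<N. t = E!j \<or> t \<in> cell j"
proof -
  define J where "J = {i. i \<le> N \<and> E!i \<le> t}"
  have "finite J" "0 \<in> J" using t E_first by (auto simp: J_def)
  then have "Max J \<in> J" and j_max: "\<And>i. i \<in> J \<Longrightarrow> i \<le> Max J"
    using Max_in Max_ge by blast+
  then have j: "Max J \<le> N" "E!(Max J) \<le> t" by (auto simp: J_def)
  have "Max J \<noteq> N" using j E_last t by auto
  then have "Max J + 1 \<notin> J" using j_max by fastforce
  then have "t < E!(Max J + 1)" using j \<open>Max J \<noteq> N\<close> by (auto simp: J_def)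
  then show ?thesis using j \<open>Max J \<noteq> N\<close> by (intro exI[of _ "Max J"]) (auto simp: cell_def)
qed

lemma prev_less: "j < N \<Longrightarrow> prev j < N"
  using N_pos by (simp add: prev_def)

lemma prev_pos: "0 < j \<Longrightarrow> j < N \<Longrightarrow> prev j = j - 1"
  unfolding prev_def by (rule cyclic_pred_pos)

lemma prev_0: "prev 0 = N - 1"
  using N_pos by (simp add: prev_def)

lemma measure_eq_sum_cells:
  assumes A: "A \<subseteq> {0..<2*pi}" "A \<in> sets lebesgue"
  shows "measure lebesgue A = (\<Sum>j<N. measure lebesgue (A \<inter> cell j))"
proof -
  have "measure lebesgue A = measure lebesgue (A - set E)"
    using measure_Diff_null_set[OF A(2) finite_imp_null_set_lebesgue] by simp
  also have "A - set E = (\<Union>j<N. A \<inter> cell j)"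
  proof (intro set_eqI iffI)
    fix t assume t: "t \<in> A - set E"
    then obtain j where "j < N" "t = E!j \<or> t \<in> cell j" using A event_or_cell by blast
    then show "t \<in> (\<Union>j<N. A \<inter> cell j)" using t by auto
  next
    fix t assume "t \<in> (\<Union>j<N. A \<inter> cell j)"
    then show "t \<in> A - set E" using set_notin_cell by blast
  qed
  also have "measure lebesgue (\<Union>j<N. A \<inter> cell j) = (\<Sum>j<N. measure lebesgue (A \<inter> cell j))"
  proof (rule measure_finite_Union)
    show "(\<lambda>j. A \<inter> cell j) ` {..<N} \<subseteq> sets lebesgue" using A by (auto simp: cell_def)
    show "disjoint_family_on (\<lambda>j. A \<inter> cell j) {..<N}"
      unfolding disjoint_family_on_def using cell_disjoint by blast
    fix j
    have "emeasure lebesgue (A \<inter> cell j) \<le> emeasure lebesgue {0..2*pi}"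
      by (rule emeasure_mono) (use A in auto)
    then show "emeasure lebesgue (A \<inter> cell j) \<noteq> \<infinity>" by (auto simp: top_unique)
  qed simp
  finally show ?thesis .
qed

lemma interval_labeling_cell:
  assumes "j < N" "\<alpha> \<in> cell j"
  shows "interval_labeling y \<alpha> \<longleftrightarrow> y j"
proof -
  have "\<not> (\<exists>j'<N. \<alpha> = E!j')" using event_notin_cell assms by fastforce
  moreover have "(\<exists>j'<N. \<alpha> \<in> cell j' \<and> y j') \<longleftrightarrow> y j" using cell_disjoint assms by blast
  ultimately show ?thesis unfolding interval_labeling_def by blast
qed

lemma interval_labeling_event:
  assumes "j < N"
  shows "interval_labeling y (E!j) \<longleftrightarrow> y j \<and> y (prev j)"
proof -
  have "\<not> (\<exists>j'<N. E!j \<in> cell j')" using event_notin_cell assms by fastforce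
  moreover have "E!j = E!j' \<longleftrightarrow> j = j'" if "j' < N" for j'
    using E_eq_iff[of j j'] assms that by simp
  then have "(\<exists>j'<N. E!j = E!j' \<and> y j' \<and> y (prev j')) \<longleftrightarrow> y j \<and> y (prev j)"
    using assms by auto
  ultimately show ?thesis unfolding interval_labeling_def by blast
qed

lemma measure_interval_labeling_cell:
  assumes "j < N"
  shows "measure lebesgue (active_angles y \<inter> cell j)
    = of_bool (y j) * (E!(j+1) - E!j)"
proof -
  have "active_angles y \<inter> cell j = (if y j then cell j else {})"
    using interval_labeling_cell[OF assms, of _ y] cell_subset[OF assms] by auto
  then show ?thesis using assms measure_cell by simp
qed

lemma interval_labeling_run:
  assumes "s \<le> j" "j < N" "\<And>t. s \<le> t \<Longrightarrow> t \<le> j \<Longrightarrow> y t" and \<alpha>: "\<alpha> \<in> {E!s<..<E!(j+1)}"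
  shows "interval_labeling y \<alpha>"
proof -
  have "\<alpha> \<in> {0..<2*pi}" using \<alpha> E_range[of s] E_range[of "j+1"] assms by auto
  then obtain j' where j': "j' < N" "\<alpha> = E!j' \<or> \<alpha> \<in> cell j'" using event_or_cell by blast
  show ?thesis
  proof (cases "\<alpha> \<in> cell j'")
    case True
    then have "E!s < E!(j'+1)" "E!j' < E!(j+1)" using \<alpha> by (auto simp: cell_def)
    then have "s \<le> j'" "j' \<le> j"
      using E_less_iff[of s "j'+1"] E_less_iff[of j' "j+1"] assms(1,2) j'(1) by auto
    then show ?thesis using interval_labeling_cell[OF j'(1) True] assms(3) by simp
  next
    case False
    then have \<alpha>_eq: "\<alpha> = E!j'" using j' by simp
    then have "E!s < E!j'" "E!j' < E!(j+1)" using \<alpha> by auto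
    then have "s < j'" "j' \<le> j"
      using E_less_iff[of s j'] E_less_iff[of j' "j+1"] assms(1,2) j'(1) by auto
    then have "y j'" "y (prev j')" using assms(3) prev_pos[of j'] j'(1) by auto
    then show ?thesis using interval_labeling_event[OF j'(1)] \<alpha>_eq by simp
  qed
qed

lemma run_start_exists:
  assumes "j < N" "y j" "\<exists>z<N. \<not> y z"
  obtains s where "s < N" "y s" "\<not> y (prev s)" "s \<le> j" "\<And>t. s \<le> t \<Longrightarrow> t \<le> j \<Longrightarrow> y t"
    | s where "s < N" "y s" "\<not> y (prev s)" "j < s" "\<And>t. s \<le> t \<Longrightarrow> t < N \<Longrightarrow> y t"
      "\<And>t. t \<le> j \<Longrightarrow> y t"
proof (cases "\<exists>z<j. \<not> y z")
  case True
  define g where "g = Max {z. z < j \<and> \<not> y z}"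
  have g: "g < j" "\<not> y g" "\<And>z. z < j \<Longrightarrow> \<not> y z \<Longrightarrow> z \<le> g"
    using Max_in[of "{z. z < j \<and> \<not> y z}"] Max_ge[of "{z. z < j \<and> \<not> y z}"] True
    by (auto simp: g_def)
  have ones: "y t" if "g + 1 \<le> t" "t \<le> j" for t
    using g(3)[of t] that assms(2) by (cases "t = j") auto
  have "prev (g + 1) = g" using prev_pos[of "g+1"] g assms(1) by simp
  show ?thesis
  proof (rule that(1)[of "g+1"])
    show "g + 1 < N" using g(1) assms(1) by simp
    show "y (g + 1)" using ones g(1) by simp
    show "\<not> y (prev (g + 1))" using g(2) \<open>prev (g + 1) = g\<close> by simp
    show "g + 1 \<le> j" using g(1) by simp
    show "\<And>t. g + 1 \<le> t \<Longrightarrow> t \<le> j \<Longrightarrow> y t" by (rule ones)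
  qed
next
  case False
  have low: "y t" if "t \<le> j" for t
    using False assms(2) that by (cases "t = j") auto
  define g where "g = Max {z. z < N \<and> \<not> y z}"
  have "g \<in> {z. z < N \<and> \<not> y z}" unfolding g_def using assms(3) by (intro Max_in) auto
  then have g: "g < N" "\<not> y g" "\<And>z. z < N \<Longrightarrow> \<not> y z \<Longrightarrow> z \<le> g"
    by (auto simp: g_def)
  have "j < g" using low g by (metis not_le)
  show ?thesis
  proof (cases "g = N - 1")
    case True
    show ?thesis
    proof (rule that(1)[of 0])
      show "0 < N" "0 \<le> j" using N_pos by simp_all
      show "y 0" using low by simp
      show "\<not> y (prev 0)" using g(2) True prev_0 by simp
      show "\<And>t. 0 \<le> t \<Longrightarrow> t \<le> j \<Longrightarrow> y t" by (rule low)
    qed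
  next
    case False
    have high: "y t" if "g + 1 \<le> t" "t < N" for t
      by (rule ccontr) (use g(3)[of t] that in simp)
    have "prev (g + 1) = g" using prev_pos[of "g+1"] g False by simp
    show ?thesis
    proof (rule that(2)[of "g+1"])
      show "g + 1 < N" using False g(1) by simp
      then show "y (g + 1)" using high by simp
      show "\<not> y (prev (g + 1))" using g(2) \<open>prev (g + 1) = g\<close> by simp
      show "j < g + 1" using \<open>j < g\<close> by simp
      show "\<And>t. g + 1 \<le> t \<Longrightarrow> t < N \<Longrightarrow> y t" by (rule high)
      show "\<And>t. t \<le> j \<Longrightarrow> y t" by (rule low)
    qed
  qed
qed

lemma run_subset_active_angles:
  assumes "s \<le> j" "j < N" "\<And>t. s \<le> t \<Longrightarrow> t \<le> j \<Longrightarrow> y t"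
  shows "{E!s<..<E!(j+1)} \<subseteq> active_angles y"
proof
  fix t assume t: "t \<in> {E!s<..<E!(j+1)}"
  then have "t \<in> {0..<2*pi}" using E_range[of s] E_range[of "j+1"] assms(1,2) by auto
  then show "t \<in> active_angles y" using interval_labeling_run[OF assms t] by simp
qed

lemma wrapped_run_subset_active_angles:
  assumes "j < s" "s < N" "\<And>t. s \<le> t \<Longrightarrow> t < N \<Longrightarrow> y t" "\<And>t. t \<le> j \<Longrightarrow> y t"
    and lm: "lm < E!(j+1)"
  shows "cis ` {E!s<..lm + 2*pi} \<subseteq> cis ` active_angles y"
proof
  fix z assume "z \<in> cis ` {E!s<..lm + 2*pi}"
  then obtain t where t: "E!s < t" "t \<le> lm + 2*pi" and z: "z = cis t" by auto
  consider "t < 2*pi" | "t = 2*pi" | "2*pi < t" by linarith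
  then show "z \<in> cis ` active_angles y"
  proof cases
    case 1
    have "{E!s<..<E!(N - 1 + 1)} \<subseteq> active_angles y"
      by (rule run_subset_active_angles) (use assms(2,3) in auto)
    moreover have "N - 1 + 1 = N" using N_pos by simp
    ultimately have "t \<in> active_angles y" using t 1 E_last by auto
    then show ?thesis using z by blast
  next
    case 2
    have "interval_labeling y (E!0)"
      using interval_labeling_event[of 0] assms(2-4) prev_0 N_pos by auto
    then have "0 \<in> active_angles y" using E_first by simp
    moreover have "z = cis 0" using z 2 by simp
    ultimately show ?thesis by blast
  next
    case 3
    have "0 \<le> E!s" using E_range[of s] assms(2) by simp
    then have "t - 2*pi \<in> {E!0<..<E!(j+1)}" using t 3 lm E_first by auto
    moreover have "{E!0<..<E!(j+1)} \<subseteq> active_angles y"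
      by (rule run_subset_active_angles) (use assms(1,2,4) in auto)
    ultimately have "t - 2*pi \<in> active_angles y" by blast
    moreover have "z = cis (t - 2*pi)" using z by simp
    ultimately show ?thesis by blast
  qed
qed

text \<open>The run of active cells through \<open>\<alpha>\<close> may wrap around past \<open>2\<pi>\<close>, so \<open>lm\<close> may be
  \<open>\<alpha> + 2\<pi>\<close>.\<close>
lemma active_angle_reached_by_run:
  assumes off: "\<exists>z<N. \<not> y z" and \<alpha>: "\<alpha> \<in> active_angles y"
  obtains s lm where "s < N" "y s" "\<not> y (prev s)" "E!s < lm" "cis lm = cis \<alpha>"
    "cis ` {E!s<..lm} \<subseteq> cis ` active_angles y"
proof -
  obtain j where j: "j < N" "\<alpha> = E!j \<or> \<alpha> \<in> cell j" using event_or_cell \<alpha> by blast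
  have yj: "y j" and y_prev: "\<alpha> = E!j \<Longrightarrow> y (prev j)"
    using j \<alpha> interval_labeling_cell[of j \<alpha> y] interval_labeling_event[of j y]
      event_notin_cell[of j j] by auto
  have \<alpha>_le: "E!j \<le> \<alpha>" "\<alpha> < E!(j+1)" using j E_less[of j "j+1"] by (auto simp: cell_def)
  from run_start_exists[OF j(1) yj off] show thesis
  proof cases
    case (1 s)
    have s_less: "E!s < \<alpha>"
    proof (cases "s = j")
      case True
      then show ?thesis using 1(3) y_prev \<alpha>_le by (cases "\<alpha> = E!j") auto
    next
      case False
      then show ?thesis using E_less[of s j] 1 j(1) \<alpha>_le by simp
    qed
    have "{E!s<..<E!(j+1)} \<subseteq> active_angles y"
      by (rule run_subset_active_angles) (use 1 j(1) in auto)
    moreover have "{E!s<..\<alpha>} \<subseteq> {E!s<..<E!(j+1)}" using \<alpha>_le by auto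
    ultimately have "{E!s<..\<alpha>} \<subseteq> active_angles y" by blast
    then have "cis ` {E!s<..\<alpha>} \<subseteq> cis ` active_angles y" by (rule image_mono)
    then show thesis by (intro that[of s \<alpha>] 1 s_less refl)
  next
    case (2 s)
    have "E!s < 2*pi" using E_less[of s N] E_last 2 by simp
    then have "E!s < \<alpha> + 2*pi" using \<alpha> by simp
    moreover have "cis ` {E!s<..\<alpha> + 2*pi} \<subseteq> cis ` active_angles y"
      by (rule wrapped_run_subset_active_angles) (use 2 \<alpha>_le in auto)
    ultimately show thesis by (intro that[of s "\<alpha> + 2*pi"] 2) simp_all
  qed
qed

lemma card_components_active_angles:
  "finite (components (cis ` active_angles y)) \<and>
   card (components (cis ` active_angles y)) \<le> max 1 (card {j. j < N \<and> y j \<and> \<not> y (prev j)})"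
proof (cases "\<forall>j<N. y j")
  case True
  have "interval_labeling y \<alpha>" if \<alpha>: "\<alpha> \<in> {0..<2*pi}" for \<alpha>
  proof -
    obtain j where "j < N" "\<alpha> = E!j \<or> \<alpha> \<in> cell j" using event_or_cell \<alpha> by blast
    then show ?thesis
      using True prev_less interval_labeling_cell interval_labeling_event by auto
  qed
  then have "active_angles y = {0..<2*pi}" by auto
  then have "cis ` active_angles y = sphere 0 1" using cis_image_0_2pi by simp
  moreover have "components (sphere (0::complex) 1) = {sphere 0 1}"
    by (subst components_eq_sing_iff) (auto intro!: connected_sphere)
  ultimately show ?thesis by simp
next
  case False
  define R where "R = {j. j < N \<and> y j \<and> \<not> y (prev j)}"
  define reach where "reach s = {lm. E!s < lm \<and> cis ` {E!s<..lm} \<subseteq> cis ` active_angles y}" for s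
  have finR: "finite R" by (simp add: R_def)
  have conn: "connected (cis ` reach s)" for s
  proof -
    have "x \<in> reach s" if "a \<in> reach s" "b \<in> reach s" "a \<le> x" "x \<le> b" for a b x
    proof -
      have "cis ` {E!s<..x} \<subseteq> cis ` {E!s<..b}" using that(4) by (intro image_mono) auto
      moreover have "E!s < x" using that(1,3) by (simp add: reach_def)
      ultimately show ?thesis using that(2) unfolding reach_def by blast
    qed
    then have "is_interval (reach s)" unfolding is_interval_1 by blast
    then show ?thesis
      by (intro connected_continuous_image continuous_intros) (simp add: is_interval_connected)
  qed
  have cover: "cis ` active_angles y = (\<Union>s\<in>R. cis ` reach s)"
  proof
    show "cis ` active_angles y \<subseteq> (\<Union>s\<in>R. cis ` reach s)"
    proof
      fix z assume "z \<in> cis ` active_angles y"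
      then obtain \<alpha> where \<alpha>: "\<alpha> \<in> active_angles y" "z = cis \<alpha>" by blast
      obtain s lm where "s < N" "y s" "\<not> y (prev s)" "E!s < lm" "cis lm = cis \<alpha>"
        "cis ` {E!s<..lm} \<subseteq> cis ` active_angles y"
        using active_angle_reached_by_run False \<alpha>(1) by blast
      then have "s \<in> R" "lm \<in> reach s" "z = cis lm" using \<alpha>(2) by (simp_all add: R_def reach_def)
      then show "z \<in> (\<Union>s\<in>R. cis ` reach s)" by blast
    qed
    show "(\<Union>s\<in>R. cis ` reach s) \<subseteq> cis ` active_angles y"
    proof (intro UN_least subsetI)
      fix s z assume "z \<in> cis ` reach s"
      then obtain lm where "E!s < lm" "cis ` {E!s<..lm} \<subseteq> cis ` active_angles y" "z = cis lm"
        by (auto simp: reach_def)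
      then show "z \<in> cis ` active_angles y" by auto
    qed
  qed
  have "finite (components (cis ` active_angles y))"
    "card (components (cis ` active_angles y)) \<le> card R"
    using card_components_UN_connected_le[where U="\<lambda>s. cis ` reach s", OF finR conn cover]
    by blast+
  then show ?thesis unfolding R_def by linarith
qed

end

lemma circle_partition_sorted_list_of_set:
  assumes P: "finite P" "P \<subseteq> {0..2*pi}" "0 \<in> P" "2*pi \<in> P"
  shows "circle_partition (sorted_list_of_set P)"
proof
  define xs where "xs = sorted_list_of_set P"
  have set_xs: "set xs = P" and sorted: "sorted_wrt (<) xs"
    using P(1) by (simp_all add: xs_def strict_sorted_list_of_set)
  have "card {0, 2*pi} \<le> card P" using P by (intro card_mono) auto
  then show "2 \<le> length (sorted_list_of_set P)" by simp
  then have len: "0 < length xs" by (simp add: xs_def)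
  have le_nth: "xs ! i \<le> xs ! j" if "i \<le> j" "j < length xs" for i j
    using sorted_wrt_nth_less[OF sorted, of i j] that by (cases "i = j") auto
  obtain k where "k < length xs" "xs ! k = 0" using P(3) set_xs by (metis in_set_conv_nth)
  moreover have "0 \<le> xs ! 0" using nth_mem[OF len] set_xs P(2) by auto
  ultimately show "sorted_list_of_set P ! 0 = 0" using le_nth[of 0 k] by (simp add: xs_def)
  obtain k where "k < length xs" "xs ! k = 2*pi" using P(4) set_xs by (metis in_set_conv_nth)
  moreover have "xs ! (length xs - 1) \<le> 2*pi"
    using nth_mem[of "length xs - 1" xs] len set_xs P(2) by auto
  ultimately show "sorted_list_of_set P ! (length (sorted_list_of_set P) - 1) = 2*pi"
    using le_nth[of k "length xs - 1"] by (simp add: xs_def)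
qed (simp add: strict_sorted_list_of_set assms)

section \<open>Conflicts on the cells between conflict events\<close>

lemma in_conflict_add_2pi: "in_conflict p lab i m (t + 2*pi) = in_conflict p lab i m t"
  by (simp add: in_conflict_def rotate_about_def)

lemma active_angles_sets_lebesgue:
  "finite (active_ranges \<phi> i) \<Longrightarrow> {\<alpha> \<in> {0..<2*pi}. \<phi> i \<alpha>} \<in> sets lebesgue"
  unfolding active_ranges_def by (rule measure_eq_sum_range_length_components(1)) auto

lemma total_activity_eq_sum_measure:
  assumes "\<And>i. i < n \<Longrightarrow> finite (active_ranges \<phi> i)"
  shows "total_activity n \<phi> = (\<Sum>i<n. measure lebesgue {\<alpha> \<in> {0..<2*pi}. \<phi> i \<alpha>})"
  unfolding total_activity_def
proof (intro sum.cong refl)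
  fix i assume "i \<in> {..<n}"
  then show "(\<Sum>C \<in> active_ranges \<phi> i. range_length C) = measure lebesgue {\<alpha> \<in> {0..<2*pi}. \<phi> i \<alpha>}"
    using assms unfolding active_ranges_def
    by (intro measure_eq_sum_range_length_components(2)) auto
qed

locale rotation_instance =
  fixes n :: nat and p :: "nat \<Rightarrow> complex" and lab :: "nat \<Rightarrow> complex set"
  assumes finite_events: "finite (conflict_events n p lab)"
begin

lemma events_subset: "conflict_events n p lab \<subseteq> {0..<2*pi}"
  unfolding conflict_events_def by auto

sublocale circle_partition "event_list n p lab"
  unfolding event_list_def
  by (rule circle_partition_sorted_list_of_set) (use finite_events events_subset in auto)

abbreviation E :: "real list" where "E \<equiv> event_list n p lab"

lemma num_intervals_eq: "num_intervals n p lab = N"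
  by (simp add: num_intervals_def)

lemma set_event_list: "set E = insert 0 (insert (2*pi) (conflict_events n p lab))"
  unfolding event_list_def using finite_events by (intro set_sorted_list_of_set) simp

lemma conflict_during_iff: "conflict_during n p lab i m j \<longleftrightarrow> (\<exists>\<alpha> \<in> cell j. in_conflict p lab i m \<alpha>)"
  by (auto simp: conflict_during_def cell_def)

lemma ilp_feasible_iff:
  "ilp_feasible n p lab k x b \<longleftrightarrow>
     (\<forall>i<n. \<forall>j<N. x i j \<in> {0,1} \<and> b i j \<in> {0,1}) \<and>
     (\<forall>i<n. \<forall>j<N. x i j - b i j \<le> x i (prev j)) \<and>
     (\<forall>i<n. (\<Sum>j<N. b i j) \<le> int k) \<and>
     (\<forall>i<n. \<forall>m<n. \<forall>j<N. i \<noteq> m \<longrightarrow> conflict_during n p lab i m j \<longrightarrow> x i j + x m j \<le> 1)"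
  by (simp add: ilp_feasible_def num_intervals_eq prev_def Let_def)

text \<open>Within a cell no conflict range starts or ends, because its endpoints are conflict events.\<close>
lemma in_conflict_constant_on_cell:
  assumes j: "j < N" and \<alpha>: "\<alpha> \<in> cell j" "\<alpha>' \<in> cell j" and c: "in_conflict p lab i m \<alpha>'"
    and im: "i < n" "m < n"
  shows "in_conflict p lab i m \<alpha>"
proof (rule ccontr)
  assume nc: "\<not> in_conflict p lab i m \<alpha>"
  define C where "C = connected_component_set {\<alpha>. in_conflict p lab i m \<alpha>} \<alpha>'"
  have C_range: "C \<in> conflict_ranges p lab i m"
    unfolding C_def conflict_ranges_def by (rule componentsI) (simp add: c)
  define T where "T = {min \<alpha> \<alpha>'..max \<alpha> \<alpha>'}"
  have "connected T" by (simp add: T_def)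
  moreover have "\<alpha>' \<in> T \<inter> C" using c by (auto simp: C_def T_def)
  then have "T \<inter> C \<noteq> {}" by blast
  moreover have "\<alpha> \<in> T - C" using nc connected_component_subset by (fastforce simp: C_def T_def)
  then have "T - C \<noteq> {}" by blast
  ultimately have "T \<inter> frontier C \<noteq> {}" by (rule connected_Int_frontier)
  then obtain f where f: "f \<in> T" "f \<in> frontier C" by auto
  have f_cell: "f \<in> cell j" using f(1) \<alpha> by (auto simp: T_def cell_def)
  then have "f \<in> conflict_events n p lab"
    using cell_subset[OF j] im C_range f(2) by (auto simp: conflict_events_def)
  then show False using set_notin_cell[OF _ j] f_cell set_event_list by blast
qed

lemma in_conflict_at_event:
  assumes pos: "\<forall>C \<in> conflict_ranges p lab i m. emeasure lebesgue C > 0"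
    and j: "j < N" and c: "in_conflict p lab i m (E!j)"
  shows "conflict_during n p lab i m j \<or> conflict_during n p lab i m (prev j)"
proof -
  define C where "C = connected_component_set {\<alpha>. in_conflict p lab i m \<alpha>} (E!j)"
  have C_range: "C \<in> conflict_ranges p lab i m"
    unfolding C_def conflict_ranges_def by (rule componentsI) (simp add: c)
  have "C \<noteq> {E!j}"
    using pos C_range finite_imp_null_set_lebesgue[of "{E!j}"] by auto
  moreover have "E!j \<in> C" using c by (simp add: C_def)
  ultimately obtain c' where "c' \<in> C" "c' \<noteq> E!j" by blast
  moreover have "is_interval C" unfolding C_def is_interval_connected_1 by simp
  moreover define a where "a = (if j = 0 then E!(N - 1) - 2*pi else E!(j - 1))"
  have "a < E!j"
    using E_less[of "j - 1" j] E_less[of "N - 1" N] E_first E_last N_pos j by (auto simp: a_def)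
  moreover have "E!j < E!(j+1)" using E_less j by simp
  ultimately consider (right) t where "t \<in> C" "E!j < t" "t < E!(j+1)"
    | (left) t where "t \<in> C" "a < t" "t < E!j"
    using interval_meets_punctured_neighbourhood[of C "E!j" c' a "E!(j+1)"] \<open>E!j \<in> C\<close> by blast
  then show ?thesis
  proof cases
    case right
    then have "in_conflict p lab i m t" using connected_component_subset by (force simp: C_def)
    then show ?thesis using right j by (auto simp: conflict_during_iff cell_def)
  next
    case left
    then have t: "in_conflict p lab i m t" using connected_component_subset by (force simp: C_def)
    show ?thesis
    proof (cases "j = 0")
      case True
      have "t + 2*pi \<in> cell (N - 1)"
        unfolding cell_last using True left E_first by (auto simp: a_def)
      then have "t + 2*pi \<in> cell (prev j)" "in_conflict p lab i m (t + 2*pi)"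
        using True t prev_0 by (simp_all add: in_conflict_add_2pi)
      then show ?thesis using prev_less[OF j] by (auto simp: conflict_during_iff)
    next
      case False
      then have "t \<in> cell (prev j)" using left prev_pos[OF _ j] by (auto simp: a_def cell_def)
      then show ?thesis using t by (auto simp: conflict_during_iff)
    qed
  qed
qed

section \<open>Every feasible labeling is dominated by an ILP solution\<close>

lemma ilp_objective_eq:
  "ilp_objective n p lab x = (\<Sum>i<n. \<Sum>j<N. of_int (x i j) * (E!(j+1) - E!j))"
  by (simp add: ilp_objective_def num_intervals_eq)

lemma sampled_ilp_feasible:
  assumes \<psi>: "kR_feasible n p lab k \<psi>" and \<sigma>: "\<And>j. j < N \<Longrightarrow> \<sigma> j \<in> cell j"
  shows "ilp_feasible n p lab k (\<lambda>i j. of_bool (\<psi> i (\<sigma> j)))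
    (\<lambda>i j. of_bool (\<psi> i (\<sigma> j) \<and> \<not> \<psi> i (\<sigma> (prev j))))"
  unfolding ilp_feasible_iff
proof (intro conjI allI impI)
  have \<sigma>_range: "\<sigma> j \<in> {0..<2*pi}" if "j < N" for j
    using \<sigma>[OF that] cell_subset[OF that] by auto
  fix i assume i: "i < n"
  define S where "S = cis ` {\<alpha> \<in> {0..<2*pi}. \<psi> i \<alpha>}"
  have in_S: "cis (\<sigma> j) \<in> S \<longleftrightarrow> \<psi> i (\<sigma> j)" if "j < N" for j
    using \<sigma>_range[OF that] inj_on_cis_0_2pi by (auto simp: S_def dest: inj_onD)
  have \<sigma>_mono: "\<sigma> a < \<sigma> b" if "a < b" "b < N" for a b
  proof -
    have "\<sigma> a < E!(a+1)" using \<sigma>[of a] that by (simp add: cell_def)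
    also have "E!(a+1) \<le> E!b" using E_le[of "a+1" b] that by simp
    also have "E!b < \<sigma> b" using \<sigma>[of b] that by (simp add: cell_def)
    finally show ?thesis .
  qed
  have fin: "finite (components S)" "card (components S) \<le> k"
    using \<psi> i by (simp_all add: kR_feasible_def active_ranges_def S_def)
  have "{j. j < N \<and> \<psi> i (\<sigma> j) \<and> \<not> \<psi> i (\<sigma> (prev j))}
      = {j. j < N \<and> cis (\<sigma> j) \<in> S \<and> cis (\<sigma> ((j + N - 1) mod N)) \<notin> S}"
    using in_S prev_less by (auto simp: prev_def)
  also have "card \<dots> \<le> card (components S)"
    by (rule card_cyclic_entries_le_card_components) (use fin \<sigma>_mono \<sigma>_range in \<open>auto simp: S_def\<close>)
  finally show "(\<Sum>j<N. of_bool (\<psi> i (\<sigma> j) \<and> \<not> \<psi> i (\<sigma> (prev j)))) \<le> int k"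
    using fin(2) by (simp add: Int_def)
next
  fix i m j assume im: "i < n" "m < n" "j < N" "i \<noteq> m" "conflict_during n p lab i m j"
  then obtain \<alpha>' where "\<alpha>' \<in> cell j" "in_conflict p lab i m \<alpha>'"
    by (auto simp: conflict_during_iff)
  then have "in_conflict p lab i m (\<sigma> j)"
    using in_conflict_constant_on_cell[OF im(3) \<sigma>[OF im(3)]] im(1,2) by blast
  moreover have "\<sigma> j \<in> {0..<2*pi}" using \<sigma>[OF im(3)] cell_subset[OF im(3)] by auto
  ultimately have "\<not> (\<psi> i (\<sigma> j) \<and> \<psi> m (\<sigma> j))"
    using \<psi> im unfolding kR_feasible_def valid_labeling_def in_conflict_def by blast
  then show "of_bool (\<psi> i (\<sigma> j)) + of_bool (\<psi> m (\<sigma> j)) \<le> (1::int)" by auto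
qed auto

lemma total_activity_le_sampled_objective:
  assumes fin: "\<And>i. i < n \<Longrightarrow> finite (active_ranges \<psi> i)"
    and \<sigma>: "\<And>j. j < N \<Longrightarrow> \<sigma> j \<in> cell j"
    and \<sigma>_max: "\<And>j \<alpha>. j < N \<Longrightarrow> \<alpha> \<in> cell j \<Longrightarrow>
      card {i. i < n \<and> \<psi> i \<alpha>} \<le> card {i. i < n \<and> \<psi> i (\<sigma> j)}"
  shows "total_activity n \<psi> \<le> ilp_objective n p lab (\<lambda>i j. of_bool (\<psi> i (\<sigma> j)))"
proof -
  define A where "A i = {\<alpha> \<in> {0..<2*pi}. \<psi> i \<alpha>}" for i
  have A_sets: "A i \<in> sets lebesgue" if "i < n" for i
    unfolding A_def using fin[OF that] by (rule active_angles_sets_lebesgue)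
  have "total_activity n \<psi> = (\<Sum>i<n. measure lebesgue (A i))"
    unfolding A_def by (rule total_activity_eq_sum_measure) (rule fin)
  also have "\<dots> = (\<Sum>i<n. \<Sum>j<N. measure lebesgue (A i \<inter> cell j))"
  proof (intro sum.cong refl)
    fix i assume "i \<in> {..<n}"
    then show "measure lebesgue (A i) = (\<Sum>j<N. measure lebesgue (A i \<inter> cell j))"
      using A_sets by (intro measure_eq_sum_cells) (auto simp: A_def)
  qed
  also have "\<dots> = (\<Sum>j<N. \<Sum>i<n. measure lebesgue (A i \<inter> cell j))"
    by (rule sum.swap)
  also have "\<dots> \<le> (\<Sum>j<N. real (card {i. i < n \<and> \<psi> i (\<sigma> j)}) * (E!(j+1) - E!j))"
  proof (intro sum_mono)
    fix j assume j: "j \<in> {..<N}"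
    show "(\<Sum>i<n. measure lebesgue (A i \<inter> cell j))
        \<le> real (card {i. i < n \<and> \<psi> i (\<sigma> j)}) * (E!(j+1) - E!j)"
      unfolding cell_def
    proof (rule sum_measure_Int_Ioo_le)
      show "E!j < E!(j+1)" using E_less j by simp
      fix t assume "t \<in> {E!j<..<E!(j+1)}"
      then have "t \<in> cell j" by (simp add: cell_def)
      moreover have "t \<in> {0..<2*pi}" using cell_subset j \<open>t \<in> cell j\<close> by fastforce
      ultimately
      show "card {i. i < n \<and> t \<in> A i} \<le> card {i. i < n \<and> \<psi> i (\<sigma> j)}"
        using \<sigma>_max j by (simp add: A_def)
    qed (rule A_sets)
  qed
  also have "\<dots> = ilp_objective n p lab (\<lambda>i j. of_bool (\<psi> i (\<sigma> j)))"
    unfolding ilp_objective_eq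
    by (subst sum.swap) (simp add: sum_distrib_right[symmetric] Int_def)
  finally show ?thesis .
qed

lemma total_activity_le_ilp_optimum:
  assumes opt: "ilp_optimal n p lab k x b" and \<psi>: "kR_feasible n p lab k \<psi>"
  shows "total_activity n \<psi> \<le> ilp_objective n p lab x"
proof -
  define cnt where "cnt \<alpha> = card {i. i < n \<and> \<psi> i \<alpha>}" for \<alpha>
  have "cnt \<alpha> < n + 1" for \<alpha>
  proof -
    have "cnt \<alpha> \<le> card {..<n}" unfolding cnt_def by (rule card_mono) auto
    then show ?thesis by simp
  qed
  then have "\<exists>\<sigma>. \<sigma> \<in> cell j \<and> (\<forall>\<alpha>. \<alpha> \<in> cell j \<longrightarrow> cnt \<alpha> \<le> cnt \<sigma>)" if "j < N" for j
    using Lattices_Big.ex_has_greatest_nat[of "\<lambda>\<alpha>. \<alpha> \<in> cell j", OF midpoint_in_cell[OF that]]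
    by blast
  then obtain \<sigma> where \<sigma>: "\<And>j. j < N \<Longrightarrow> \<sigma> j \<in> cell j"
    and \<sigma>_max: "\<And>j \<alpha>. j < N \<Longrightarrow> \<alpha> \<in> cell j \<Longrightarrow> cnt \<alpha> \<le> cnt (\<sigma> j)"
    by metis
  have "total_activity n \<psi> \<le> ilp_objective n p lab (\<lambda>i j. of_bool (\<psi> i (\<sigma> j)))"
    using \<psi> \<sigma> \<sigma>_max unfolding cnt_def kR_feasible_def
    by (intro total_activity_le_sampled_objective) auto
  also have "\<dots> \<le> ilp_objective n p lab x"
    using opt sampled_ilp_feasible[OF \<psi> \<sigma>] unfolding ilp_optimal_def by blast
  finally show ?thesis .
qed

section \<open>The labeling of an ILP solution\<close>

definition ilp_labeling :: "(nat \<Rightarrow> nat \<Rightarrow> int) \<Rightarrow> nat \<Rightarrow> real \<Rightarrow> bool" where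
  "ilp_labeling x i = interval_labeling (\<lambda>j. x i j = 1)"

lemma ilp_labeling_valid:
  assumes feas: "ilp_feasible n p lab k x b"
    and pos: "\<forall>i<n. \<forall>m<n. \<forall>C \<in> conflict_ranges p lab i m. emeasure lebesgue C > 0"
  shows "valid_labeling n p lab (ilp_labeling x)"
  unfolding valid_labeling_def
proof (intro ballI allI impI)
  fix \<alpha> i m assume \<alpha>: "\<alpha> \<in> {0..<2*pi}"
    and im: "i < n" "m < n" "i \<noteq> m" "ilp_labeling x i \<alpha>" "ilp_labeling x m \<alpha>"
  have excl: "x i j + x m j \<le> 1" if "j < N" "conflict_during n p lab i m j" for j
    using feas im that by (simp add: ilp_feasible_iff)
  show "rotate_about (p i) \<alpha> (lab i) \<inter> rotate_about (p m) \<alpha> (lab m) = {}"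
  proof (rule ccontr)
    assume "\<not> ?thesis"
    then have c: "in_conflict p lab i m \<alpha>" using im by (simp add: in_conflict_def)
    obtain j where j: "j < N" "\<alpha> = E!j \<or> \<alpha> \<in> cell j" using event_or_cell \<alpha> by blast
    show False
    proof (cases "\<alpha> \<in> cell j")
      case True
      then have "x i j = 1" "x m j = 1"
        using im interval_labeling_cell[OF j(1)] by (simp_all add: ilp_labeling_def)
      moreover have "conflict_during n p lab i m j" using True c by (auto simp: conflict_during_iff)
      ultimately show False using excl j(1) by fastforce
    next
      case False
      then have "\<alpha> = E!j" using j by simp
      then have "x i j = 1" "x i (prev j) = 1" "x m j = 1" "x m (prev j) = 1"
        using im interval_labeling_event[OF j(1)] by (simp_all add: ilp_labeling_def)
      moreover have "conflict_during n p lab i m j \<or> conflict_during n p lab i m (prev j)"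
        using in_conflict_at_event pos im j(1) c \<open>\<alpha> = E!j\<close> by blast
      ultimately show False using excl j(1) prev_less[OF j(1)] by fastforce
    qed
  qed
qed

lemma active_ranges_ilp_labeling:
  assumes feas: "ilp_feasible n p lab k x b" and k: "1 \<le> k" and i: "i < n"
  shows "finite (active_ranges (ilp_labeling x) i) \<and> card (active_ranges (ilp_labeling x) i) \<le> k"
proof -
  have bin: "x i j \<in> {0, 1}" "b i j \<in> {0, 1}" "x i j - b i j \<le> x i (prev j)" if "j < N" for j
    using feas i that by (simp_all add: ilp_feasible_iff)
  have "{j. j < N \<and> x i j = 1 \<and> \<not> x i (prev j) = 1} = {j \<in> {..<N}. x i j = 1 \<and> x i (prev j) = 0}"
    using bin(1) prev_less by fastforce
  then have "int (card {j. j < N \<and> x i j = 1 \<and> \<not> x i (prev j) = 1}) \<le> (\<Sum>j<N. b i j)"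
    using card_rises_le_sum[of "{..<N}" "b i" "x i" prev] bin(2,3) by force
  also have "\<dots> \<le> int k" using feas i by (simp add: ilp_feasible_iff)
  finally have "max 1 (card {j. j < N \<and> x i j = 1 \<and> \<not> x i (prev j) = 1}) \<le> k" using k by simp
  then show ?thesis
    using card_components_active_angles[of "\<lambda>j. x i j = 1"]
    unfolding active_ranges_def ilp_labeling_def by linarith
qed

lemma total_activity_ilp_labeling:
  assumes feas: "ilp_feasible n p lab k x b"
  shows "total_activity n (ilp_labeling x) = ilp_objective n p lab x"
proof -
  have fin: "finite (active_ranges (ilp_labeling x) i)" for i
    using card_components_active_angles by (simp add: active_ranges_def ilp_labeling_def)
  have "total_activity n (ilp_labeling x) = (\<Sum>i<n. measure lebesgue (active_angles (\<lambda>j. x i j = 1)))"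
    using total_activity_eq_sum_measure[of n "ilp_labeling x"] fin by (simp add: ilp_labeling_def)
  also have "\<dots> = (\<Sum>i<n. \<Sum>j<N. measure lebesgue (active_angles (\<lambda>j. x i j = 1) \<inter> cell j))"
    using active_angles_sets_lebesgue[OF fin]
    by (intro sum.cong refl measure_eq_sum_cells) (auto simp: ilp_labeling_def)
  also have "\<dots> = (\<Sum>i<n. \<Sum>j<N. of_int (x i j) * (E!(j+1) - E!j))"
  proof (intro sum.cong refl)
    fix i j assume "i \<in> {..<n}" "j \<in> {..<N}"
    then have "x i j \<in> {0, 1}" using feas by (simp add: ilp_feasible_iff)
    then show "measure lebesgue (active_angles (\<lambda>j. x i j = 1) \<inter> cell j) = of_int (x i j) * (E!(j+1) - E!j)"
      using measure_interval_labeling_cell \<open>j \<in> {..<N}\<close> by auto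
  qed
  finally show ?thesis by (simp add: ilp_objective_eq)
qed

section \<open>Size of the ILP\<close>

lemma num_intervals_le: "N \<le> card (conflict_events n p lab) + 1"
proof -
  have "length E = card (insert 0 (insert (2*pi) (conflict_events n p lab)))"
    using set_event_list distinct_card[of E] by (simp add: event_list_def)
  also have "\<dots> \<le> card (conflict_events n p lab) + 2"
    using finite_events by (simp add: card_insert_if)
  finally show ?thesis by simp
qed

lemma ilp_num_variables_le: "ilp_num_variables n p lab \<le> 2 * (card (conflict_events n p lab) + 1) * n"
proof -
  have "2 * n * N \<le> 2 * n * (card (conflict_events n p lab) + 1)"
    using num_intervals_le by (rule mult_le_mono2)
  also have "\<dots> = 2 * (card (conflict_events n p lab) + 1) * n" by (simp add: algebra_simps)
  finally show ?thesis by (simp add: ilp_num_variables_def num_intervals_eq)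
qed

lemma ilp_num_constraints_le:
  "ilp_num_constraints n p lab \<le> 3 * (max_conflicts n p lab + 1) * (card (conflict_events n p lab) + 1) * n"
proof -
  define c where "c = max_conflicts n p lab"
  define e where "e = card (conflict_events n p lab) + 1"
  define M where "M i = {m. m < n \<and> (\<exists>\<alpha>. in_conflict p lab i m \<alpha>)}" for i
  define T where "T = {(i, m, j). i < m \<and> m < n \<and> j < N \<and> conflict_during n p lab i m j}"
  have card_M: "card (M i) \<le> c" if "i < n" for i
    unfolding c_def max_conflicts_def M_def using that by (intro Max_ge) auto
  have "T \<subseteq> Sigma {..<n} (\<lambda>i. M i \<times> {..<N})"
    unfolding T_def M_def conflict_during_def by auto
  then have "card T \<le> card (Sigma {..<n} (\<lambda>i. M i \<times> {..<N}))"
    by (rule card_mono[rotated]) (auto simp: M_def)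
  also have "\<dots> = (\<Sum>i<n. card (M i) * N)"
    by (subst card_SigmaI) (auto simp: M_def card_cartesian_product)
  also have "\<dots> \<le> n * (c * e)"
    using sum_mono[of "{..<n}" "\<lambda>i. card (M i) * N" "\<lambda>_. c * e"] card_M num_intervals_le
    by (fastforce simp: e_def intro: mult_le_mono)
  finally have "card T \<le> n * (c * e)" .
  moreover have "n * N \<le> n * e" unfolding e_def using num_intervals_le by (rule mult_le_mono2)
  then have "n * N + n \<le> 2 * n * e" by (simp add: e_def algebra_simps)
  ultimately have "ilp_num_constraints n p lab \<le> (c + 2) * e * n"
    by (simp add: ilp_num_constraints_def num_intervals_eq T_def algebra_simps)
  also have "\<dots> \<le> 3 * (c + 1) * e * n" by (intro mult_le_mono1) simp
  finally show ?thesis by (simp add: c_def e_def)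
qed

end

theorem theorem3:
  fixes n k :: nat and p :: "nat \<Rightarrow> complex" and lab :: "nat \<Rightarrow> complex set"
    and x b :: "nat \<Rightarrow> nat \<Rightarrow> int"
  assumes inst: "label_instance n p lab"
    and k: "k \<ge> 1"
    and pos_len: "\<forall>i<n. \<forall>m<n. \<forall>C \<in> conflict_ranges p lab i m. emeasure lebesgue C > 0"
    and fin: "finite (conflict_events n p lab)"
    and opt: "ilp_optimal n p lab k x b"
  shows "(\<exists>\<phi>. maxtotal_optimal n p lab k \<phi> \<and>
            (\<forall>i<n. \<forall>j<num_intervals n p lab. \<forall>\<alpha>.
               event_list n p lab ! j < \<alpha> \<and> \<alpha> < event_list n p lab ! (j+1) \<longrightarrow>
               (\<phi> i \<alpha> \<longleftrightarrow> x i j = 1))) \<and>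
         ilp_num_variables n p lab \<le> 2 * (card (conflict_events n p lab) + 1) * n \<and>
         ilp_num_constraints n p lab \<le>
           3 * (max_conflicts n p lab + 1) * (card (conflict_events n p lab) + 1) * n"
proof -
  interpret rotation_instance n p lab by unfold_locales (rule fin)
  have feas: "ilp_feasible n p lab k x b" using opt by (simp add: ilp_optimal_def)
  have "kR_feasible n p lab k (ilp_labeling x)"
    unfolding kR_feasible_def
    using ilp_labeling_valid[OF feas pos_len] active_ranges_ilp_labeling[OF feas k] by blast
  then have "maxtotal_optimal n p lab k (ilp_labeling x)"
    unfolding maxtotal_optimal_def
    using total_activity_le_ilp_optimum[OF opt] total_activity_ilp_labeling[OF feas] by simp
  moreover have "ilp_labeling x i \<alpha> \<longleftrightarrow> x i j = 1"
    if "j < num_intervals n p lab" "E!j < \<alpha>" "\<alpha> < E!(j+1)" for i j \<alpha>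
    using that interval_labeling_cell[of j \<alpha>]
    by (simp add: ilp_labeling_def num_intervals_eq cell_def)
  ultimately show ?thesis using ilp_num_variables_le ilp_num_constraints_le by blast
qed

end
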